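(* For every $n \geq 1$, the base change map $BC : \mathcal{A}_n^t(\mathbb{R}) \to \mathcal{A}_n^t(\mathbb{C})$ is a continuous proper map of locally compact Hausdorff spaces.
   Context: For $F = \mathbb{R}$ or $\mathbb{C}$, $\mathcal{A}_n^t(F)$ is the tempered dual of $GL(n,F)$, topologized via Harish-Chandra's parametrization as the disjoint union $\bigsqcup_{(M,\sigma)} X(M)/W_\sigma(M)$: here $M$ runs over standard (block-diagonal) Levi subgroups, ${}^0M \subset M$ is the subgroup where each diagonal block has determinant of absolute value $1$, $\sigma$ runs over representatives of $W(M)$-orbits of discrete series representations of ${}^0M$ ($W(M)=N(M)/M$), $W_\sigma(M)$ is the stabilizer of $\sigma$, and $X(M)$ is the group of unramified unitary characters of $M$ (those trivial on ${}^0M$); the point $\chi \in X(M)$ corresponds to the parabolically induced representation $i_{GL(n),MN}(\chi\sigma \otimes 1)$. Each $X(M)/W_\sigma(M)$ carries the quotient topology from $X(M) \cong \mathbb{R}^{m}$. For $F=\mathbb{R}$, Levi subgroups correspond to partitions $n = 2q+r$ into $q$ twos and $r$ ones, $M \cong GL(2,\mathbb{R})^q \times (\mathbb{R}^\times)^r$ and $X(M) \cong \mathbb{R}^{q+r}$ via $\mathrm{diag}(g_1,\dots,g_q,\omega_1,\dots,\omega_r)\mapsto \prod|\det g_i|^{it_i}\prod |\omega_j|^{it_{q+j}}$; for $F=\mathbb{C}$ only the diagonal torus $T\cong(\mathbb{C}^\times)^n$ contributes, with $X(T)\cong\mathbb{R}^n$. Base change $BC$ is the map of tempered duals corresponding,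 under the local Langlands correspondence, to restriction of L-parameters from the Weil group $W_{\mathbb{R}} = \mathbb{C}^\times \rtimes \mathbb{Z}/2\mathbb{Z}$ to $W_{\mathbb{C}} = \mathbb{C}^\times$. Explicitly, for unitary characters $\chi_1,\dots,\chi_q$ of $\mathbb{C}^\times$ with $\chi_i \neq \chi_i^\sigma$ (where $\chi^\sigma(z)=\chi(\bar z)$), each defining a discrete series representation $\pi(\chi_i)$ of $GL(2,\mathbb{R})$, and unitary characters $\xi_1,\dots,\xi_r$ of $\mathbb{R}^\times$, the generalized principal series $\pi = i_{GL(n,\mathbb{R}),MN}(\pi(\chi_1)\otimes\dots\otimes\pi(\chi_q)\otimes\xi_1\otimes\dots\otimes\xi_r\otimes 1)$ is sent to $BC(\pi) = i_{GL(n,\mathbb{C}),B(\mathbb{C})}(\chi_1,\chi_1^\sigma,\dots,\chi_q,\chi_q^\sigma,\xi_1\circ N,\dots,\xi_r\circ N)$, where $B(\mathbb{C})$ is the Borel subgroup and $N(z) = z\bar z$. For $n=1$, $BC(\chi) = \chi\circ N$. *)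

theory Defs
  imports "HOL-Analysis.Analysis"
begin

definition quotient_topology :: "'a topology \<Rightarrow> ('a \<Rightarrow> 'b) \<Rightarrow> 'b topology" where
  "quotient_topology X p =
     topology (\<lambda>U. U \<subseteq> p ` topspace X \<and> openin X {x \<in> topspace X. p x \<in> U})"

definition XM_top :: "nat \<Rightarrow> (nat \<Rightarrow> real) topology" where
  "XM_top m = product_topology (\<lambda>_. euclideanreal) {..<m}"

(* ---------------- F = R ----------------
   A standard Levi of GL(n,R) is given by (q,r) with 2q+r = n,
   M = GL(2,R)^q x (R^x)^r, X(M) = R^(q+r).
   A discrete series of 0M is given by (a,e):
     a i \<ge> 1 (i<q): the discrete series of 0GL(2,R) = SL^\<plusminus>(2,R) which is the
        restriction of pi(chi) with chi(z) = (z/|z|)^(a i) (and chi^sigma);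
     e j \<in> bool (j<r): the character sgn^(e j) of 0(R^x) = {\<plusminus>1}.
   The point ((q,r),(a,e)), t  with t \<in> R^(q+r) is chi sigma, chi(g,w) =
   prod |det g_i|^(i t_i) prod |w_j|^(i t_(q+j)). *)

definition levi_dataR :: "nat \<Rightarrow> ((nat \<times> nat) \<times> ((nat \<Rightarrow> nat) \<times> (nat \<Rightarrow> bool))) set" where
  "levi_dataR n = {((q,r),(a,e)). 2*q + r = n \<and> a \<in> {..<q} \<rightarrow>\<^sub>E {1..} \<and> e \<in> {..<r} \<rightarrow>\<^sub>E UNIV}"

definition preR_top :: "nat \<Rightarrow> (((nat \<times> nat) \<times> ((nat \<Rightarrow> nat) \<times> (nat \<Rightarrow> bool))) \<times> (nat \<Rightarrow> real)) topology" where
  "preR_top n = sum_topology (\<lambda>((q,r),_). XM_top (q+r)) (levi_dataR n)"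

(* the element (pi,rho) of W(M) = S_q x S_r, as a permutation of the coordinates {..<q+r} *)
definition block_perm :: "nat \<Rightarrow> nat \<Rightarrow> (nat \<Rightarrow> nat) \<Rightarrow> (nat \<Rightarrow> nat) \<Rightarrow> nat \<Rightarrow> nat" where
  "block_perm q r \<pi> \<rho> i = (if i < q then \<pi> i else if i < q + r then q + \<rho> (i - q) else i)"

definition WR_rel ::
  "(((nat \<times> nat) \<times> ((nat \<Rightarrow> nat) \<times> (nat \<Rightarrow> bool))) \<times> (nat \<Rightarrow> real)) \<Rightarrow>
   (((nat \<times> nat) \<times> ((nat \<Rightarrow> nat) \<times> (nat \<Rightarrow> bool))) \<times> (nat \<Rightarrow> real)) \<Rightarrow> bool" where
  "WR_rel x y = (case x of (((q,r),(a,e)),t) \<Rightarrow> case y of (((q',r'),(a',e')),t') \<Rightarrow>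
      q' = q \<and> r' = r \<and>
      (\<exists>\<pi> \<rho>. \<pi> permutes {..<q} \<and> \<rho> permutes {..<r} \<and>
              a' = a \<circ> \<pi> \<and> e' = e \<circ> \<rho> \<and> t' = t \<circ> block_perm q r \<pi> \<rho>))"

definition orbitR where "orbitR x = {y. WR_rel x y}"

(* tempered dual of GL(n,R): disjoint union over (M,sigma) of X(M)/W_sigma(M),
   realised as (disjoint union over (M,sigma) of X(M)) / W(M) *)
definition tempR :: "nat \<Rightarrow> (((nat \<times> nat) \<times> ((nat \<Rightarrow> nat) \<times> (nat \<Rightarrow> bool))) \<times> (nat \<Rightarrow> real)) set topology" where
  "tempR n = quotient_topology (preR_top n) orbitR"

(* ---------------- F = C ----------------
   Only M = T = (C^x)^n; discrete series of 0T = U(1)^n given by k \<in> Z^n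
   (omega \<mapsto> prod (omega_j/|omega_j|)^(k j)); X(T) = R^n, t \<mapsto> prod |omega_j|^(i t_j)
   (|.| the usual modulus). So (k,t) is the principal series induced from the
   characters z \<mapsto> (z/|z|)^(k j) |z|^(i t j). *)

definition levi_dataC :: "nat \<Rightarrow> (nat \<Rightarrow> int) set" where
  "levi_dataC n = {..<n} \<rightarrow>\<^sub>E UNIV"

definition preC_top :: "nat \<Rightarrow> ((nat \<Rightarrow> int) \<times> (nat \<Rightarrow> real)) topology" where
  "preC_top n = sum_topology (\<lambda>_. XM_top n) (levi_dataC n)"

definition WC_rel :: "nat \<Rightarrow> ((nat \<Rightarrow> int) \<times> (nat \<Rightarrow> real)) \<Rightarrow> ((nat \<Rightarrow> int) \<times> (nat \<Rightarrow> real)) \<Rightarrow> bool" where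
  "WC_rel n x y = (case x of (k,t) \<Rightarrow> case y of (k',t') \<Rightarrow>
      (\<exists>\<pi>. \<pi> permutes {..<n} \<and> k' = k \<circ> \<pi> \<and> t' = t \<circ> \<pi>))"

definition orbitC where "orbitC n x = {y. WC_rel n x y}"

definition tempC :: "nat \<Rightarrow> ((nat \<Rightarrow> int) \<times> (nat \<Rightarrow> real)) set topology" where
  "tempC n = quotient_topology (preC_top n) (orbitC n)"

(* ---------------- Base change ----------------
   GL(2,R)-block (a_i, t_i) is pi(chi) with chi(z) = (z/|z|)^(a_i) |z|^(2 i t_i), so it
   contributes chi, chi^sigma, i.e. (a_i, 2 t_i), (-a_i, 2 t_i);
   R^x-block (e_j, t) is xi = sgn^e |.|^(i t), and xi \<circ> N = |z|^(2 i t), i.e. (0, 2t). *)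

definition bc_pre ::
  "(((nat \<times> nat) \<times> ((nat \<Rightarrow> nat) \<times> (nat \<Rightarrow> bool))) \<times> (nat \<Rightarrow> real)) \<Rightarrow>
   ((nat \<Rightarrow> int) \<times> (nat \<Rightarrow> real))" where
  "bc_pre x = (case x of (((q,r),(a,e)),t) \<Rightarrow>
     ((\<lambda>i. if i < 2*q then (if even i then int (a (i div 2)) else - int (a (i div 2)))
           else if i < 2*q + r then 0 else undefined),
      (\<lambda>i. if i < 2*q then 2 * t (i div 2)
           else if i < 2*q + r then 2 * t (i - q) else undefined)))"

definition BC :: "nat \<Rightarrow> (((nat \<times> nat) \<times> ((nat \<Rightarrow> nat) \<times> (nat \<Rightarrow> bool))) \<times> (nat \<Rightarrow> real)) set \<Rightarrow>
                  ((nat \<Rightarrow> int) \<times> (nat \<Rightarrow> real)) set" where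
  "BC n X = {y. \<exists>x\<in>X. WC_rel n (bc_pre x) y}"

end

theory Submission
  imports Defs
begin

text \<open>Both tempered duals are quotients of a disjoint union of copies of \<open>\<real>\<^sup>m\<close> by a finite group of
  homeomorphisms (the Weyl groups, permuting coordinates), hence Hausdorff and locally compact.
  On representatives base change is the continuous map \<open>bc_pre\<close>, which intertwines
  \<open>(\<pi>, \<rho>) \<in> W(M)\<close> with a permutation \<open>bc_perm q r \<pi> \<rho> \<in> W(T)\<close>, so it descends to a continuous
  map \<open>BC\<close>. For properness, the \<open>W(T)\<close>-invariant function \<open>\<Sum>\<^sub>j \<bar>k\<^sub>j\<bar> + \<bar>t\<^sub>j\<bar>\<close> on the complex side
  bounds, through \<open>bc_pre\<close>, both the discrete parameters \<open>a\<^sub>i\<close> and the continuous parameters \<open>t\<^sub>j\<close>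
  on the real side. Hence the preimage of a compact set meets only finitely many components and
  lies in a box in each of them, so it is compact; as the target is locally compact Hausdorff,
  this makes \<open>BC\<close> proper.\<close>

lemma openin_quotient_topology:
  "openin (quotient_topology X p) U \<longleftrightarrow> U \<subseteq> p ` topspace X \<and> openin X {x \<in> topspace X. p x \<in> U}"
proof -
  have "istopology (\<lambda>U. U \<subseteq> p ` topspace X \<and> openin X {x \<in> topspace X. p x \<in> U})"
    unfolding istopology_def
  proof (rule conjI; intro allI impI)
    fix S T assume "S \<subseteq> p ` topspace X \<and> openin X {x \<in> topspace X. p x \<in> S}"
      and "T \<subseteq> p ` topspace X \<and> openin X {x \<in> topspace X. p x \<in> T}"
    moreover have "{x \<in> topspace X. p x \<in> S \<inter> T} = {x \<in> topspace X. p x \<in> S} \<inter> {x \<in> topspace X. p x \<in> T}"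
      by auto
    ultimately show "S \<inter> T \<subseteq> p ` topspace X \<and> openin X {x \<in> topspace X. p x \<in> S \<inter> T}"
      by auto
  next
    fix \<U> assume "\<forall>U\<in>\<U>. U \<subseteq> p ` topspace X \<and> openin X {x \<in> topspace X. p x \<in> U}"
    moreover have "{x \<in> topspace X. p x \<in> \<Union>\<U>} = (\<Union>U\<in>\<U>. {x \<in> topspace X. p x \<in> U})"
      by auto
    ultimately show "\<Union>\<U> \<subseteq> p ` topspace X \<and> openin X {x \<in> topspace X. p x \<in> \<Union>\<U>}"
      by auto
  qed
  then show ?thesis
    unfolding quotient_topology_def by simp
qed

lemma topspace_quotient_topology [simp]: "topspace (quotient_topology X p) = p ` topspace X"
proof (rule antisym)
  show "topspace (quotient_topology X p) \<subseteq> p ` topspace X"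
    by (metis openin_quotient_topology openin_topspace)
  have "{x \<in> topspace X. p x \<in> p ` topspace X} = topspace X"
    by auto
  then have "openin (quotient_topology X p) (p ` topspace X)"
    by (simp add: openin_quotient_topology)
  then show "p ` topspace X \<subseteq> topspace (quotient_topology X p)"
    by (rule openin_subset)
qed

lemma quotient_map_quotient_topology: "quotient_map X (quotient_topology X p) p"
  unfolding quotient_map_def by (simp add: openin_quotient_topology)

lemma continuous_map_from_sum_topology:
  assumes "\<And>i. i \<in> I \<Longrightarrow> continuous_map (X i) Y (\<lambda>x. f (i, x))"
  shows "continuous_map (sum_topology X I) Y f"
  unfolding continuous_map_def
proof (intro conjI allI impI)
  show "f \<in> topspace (sum_topology X I) \<rightarrow> topspace Y"
    using assms by (fastforce simp: continuous_map_def)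
  fix U assume U: "openin Y U"
  have "openin (X i) {x \<in> topspace (X i). f (i, x) \<in> U}" if "i \<in> I" for i
    using assms[OF that] U by (rule openin_continuous_map_preimage)
  then show "openin (sum_topology X I) {x \<in> topspace (sum_topology X I). f x \<in> U}"
    unfolding openin_sum_topology by auto
qed

lemma Hausdorff_space_sum_topology:
  assumes "\<And>i. i \<in> I \<Longrightarrow> Hausdorff_space (X i)"
  shows "Hausdorff_space (sum_topology X I)"
  unfolding Hausdorff_space_def
proof (intro allI impI)
  fix x y
  assume xy: "x \<in> topspace (sum_topology X I) \<and> y \<in> topspace (sum_topology X I) \<and> x \<noteq> y"
  obtain i a j b where "x = (i, a)" "y = (j, b)"
    by fastforce
  with xy have x: "x = (i, a)" "i \<in> I" "a \<in> topspace (X i)"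
    and y: "y = (j, b)" "j \<in> I" "b \<in> topspace (X j)"
    by auto
  have open_slice: "openin (sum_topology X I) (Pair k ` U)" if "k \<in> I" "openin (X k) U" for k U
    using open_map_component_injection[OF that(1)] that(2) unfolding open_map_def by blast
  show "\<exists>U V. openin (sum_topology X I) U \<and> openin (sum_topology X I) V \<and> x \<in> U \<and> y \<in> V \<and> disjnt U V"
  proof (cases "i = j")
    case True
    then obtain U V where "openin (X i) U" "openin (X i) V" "a \<in> U" "b \<in> V" "disjnt U V"
      using assms[OF x(2)] x y xy unfolding Hausdorff_space_def by blast
    with True x y open_slice show ?thesis
      by (intro exI[of _ "Pair i ` U"] exI[of _ "Pair i ` V"]) (auto simp: disjnt_def)
  next
    case False
    then have "disjnt (Pair i ` topspace (X i)) (Pair j ` topspace (X j))"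
      by (auto simp: disjnt_def)
    with x y open_slice[OF x(2) openin_topspace] open_slice[OF y(2) openin_topspace] show ?thesis
      by blast
  qed
qed

lemma compactin_sum_topology_Sigma:
  assumes "finite J" "J \<subseteq> I" "\<And>i. i \<in> J \<Longrightarrow> compactin (X i) (S i)"
  shows "compactin (sum_topology X I) (Sigma J S)"
proof -
  have "Sigma J S = (\<Union>i\<in>J. Pair i ` S i)"
    by auto
  moreover have "compactin (sum_topology X I) (Pair i ` S i)" if "i \<in> J" for i
    using image_compactin[OF assms(3)[OF that] continuous_map_component_injection[of i I X]] that assms(2)
    by auto
  ultimately show ?thesis
    using assms(1) by (auto intro!: compactin_Union)
qed

lemma open_map_orbit_quotient:
  assumes hom: "\<And>g. g \<in> G \<Longrightarrow> homeomorphic_map X X g"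
    and orbit: "\<And>x y. \<lbrakk>x \<in> topspace X; y \<in> topspace X\<rbrakk> \<Longrightarrow> p x = p y \<longleftrightarrow> (\<exists>g\<in>G. y = g x)"
  shows "open_map X (quotient_topology X p) p"
  unfolding open_map_def
proof (intro allI impI)
  fix U assume U: "openin X U"
  then have U_sub: "U \<subseteq> topspace X"
    by (rule openin_subset)
  have g_topspace: "g ` topspace X = topspace X" if "g \<in> G" for g
    using hom[OF that] by (rule homeomorphic_imp_surjective_map)
  have "{x \<in> topspace X. p x \<in> p ` U} = (\<Union>g\<in>G. g ` U)"
  proof (intro equalityI subsetI)
    fix x assume "x \<in> {x \<in> topspace X. p x \<in> p ` U}"
    then obtain u where "u \<in> U" "p u = p x" "x \<in> topspace X"
      by auto
    with U_sub orbit[of u x] show "x \<in> (\<Union>g\<in>G. g ` U)"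
      by auto
  next
    fix x assume "x \<in> (\<Union>g\<in>G. g ` U)"
    then obtain g u where gu: "g \<in> G" "u \<in> U" "x = g u"
      by auto
    then have "x \<in> topspace X"
      using U_sub g_topspace by blast
    moreover have "p u = p x"
      using gu U_sub orbit[of u x] \<open>x \<in> topspace X\<close> by blast
    ultimately show "x \<in> {x \<in> topspace X. p x \<in> p ` U}"
      using gu by (metis (mono_tags, lifting) image_eqI mem_Collect_eq)
  qed
  moreover have "openin X (\<Union>g\<in>G. g ` U)"
    using hom homeomorphic_map_openness U_sub U by (intro openin_Union) blast
  ultimately show "openin (quotient_topology X p) (p ` U)"
    using U_sub by (auto simp: openin_quotient_topology)
qed

lemma closedin_union_of_graphs:
  assumes "finite G" "\<And>g. g \<in> G \<Longrightarrow> continuous_map X X g" "Hausdorff_space X"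
  shows "closedin (prod_topology X X) {z \<in> topspace (prod_topology X X). \<exists>g\<in>G. snd z = g (fst z)}"
proof -
  have "{z \<in> topspace (prod_topology X X). \<exists>g\<in>G. snd z = g (fst z)} =
        (\<Union>g\<in>G. {z \<in> topspace (prod_topology X X). snd z = (g \<circ> fst) z})"
    by auto
  moreover have "closedin (prod_topology X X) {z \<in> topspace (prod_topology X X). snd z = (g \<circ> fst) z}"
    if "g \<in> G" for g
    using closedin_continuous_maps_eq[OF assms(3) continuous_map_snd
        continuous_map_compose[OF continuous_map_fst assms(2)[OF that]]] .
  ultimately show ?thesis
    using assms(1) by (auto intro!: closedin_Union)
qed

text \<open>The orbit relation is closed, and an open quotient map by a closed relation has Hausdorff image.\<close>

lemma Hausdorff_space_orbit_quotient:
  assumes "finite G" and hom: "\<And>g. g \<in> G \<Longrightarrow> homeomorphic_map X X g"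
    and orbit: "\<And>x y. \<lbrakk>x \<in> topspace X; y \<in> topspace X\<rbrakk> \<Longrightarrow> p x = p y \<longleftrightarrow> (\<exists>g\<in>G. y = g x)"
    and "Hausdorff_space X"
  shows "Hausdorff_space (quotient_topology X p)"
  unfolding Hausdorff_space_def topspace_quotient_topology
proof (intro allI impI)
  let ?XX = "prod_topology X X"
  define R where "R = {z \<in> topspace ?XX. \<exists>g\<in>G. snd z = g (fst z)}"
  have "openin ?XX (topspace ?XX - R)"
    unfolding R_def using closedin_union_of_graphs[OF \<open>finite G\<close> _ \<open>Hausdorff_space X\<close>] hom
    by (simp add: closedin_def homeomorphic_imp_continuous_map)
  fix P1 P2 assume "P1 \<in> p ` topspace X \<and> P2 \<in> p ` topspace X \<and> P1 \<noteq> P2"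
  then obtain x1 x2 where x: "x1 \<in> topspace X" "x2 \<in> topspace X" "P1 = p x1" "P2 = p x2"
    and neq: "p x1 \<noteq> p x2"
    by blast
  have "(x1, x2) \<in> topspace ?XX - R"
    using x neq orbit[of x1 x2] by (auto simp: R_def)
  with \<open>openin ?XX (topspace ?XX - R)\<close> obtain U V
    where UV: "openin X U" "openin X V" "x1 \<in> U" "x2 \<in> V" "U \<times> V \<subseteq> topspace ?XX - R"
    by (metis openin_prod_topology_alt)
  have "p u \<noteq> p v" if uv: "u \<in> U" "v \<in> V" for u v
  proof
    assume "p u = p v"
    moreover have "u \<in> topspace X" "v \<in> topspace X"
      using uv UV openin_subset by blast+
    ultimately have "(u, v) \<in> R"
      using orbit[of u v] by (auto simp: R_def)
    with uv UV(5) show False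
      by blast
  qed
  then have "disjnt (p ` U) (p ` V)"
    by (auto simp: disjnt_def)
  moreover have "open_map X (quotient_topology X p) p"
    using hom orbit by (rule open_map_orbit_quotient)
  ultimately show "\<exists>U V. openin (quotient_topology X p) U \<and> openin (quotient_topology X p) V \<and>
                         P1 \<in> U \<and> P2 \<in> V \<and> disjnt U V"
    using UV x unfolding open_map_def by blast
qed

lemma locally_compact_space_orbit_quotient:
  assumes "\<And>g. g \<in> G \<Longrightarrow> homeomorphic_map X X g"
    and "\<And>x y. \<lbrakk>x \<in> topspace X; y \<in> topspace X\<rbrakk> \<Longrightarrow> p x = p y \<longleftrightarrow> (\<exists>g\<in>G. y = g x)"
    and "locally_compact_space X"
  shows "locally_compact_space (quotient_topology X p)"
  using locally_compact_space_continuous_open_map_image[OF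
      quotient_imp_continuous_map[OF quotient_map_quotient_topology]
      open_map_orbit_quotient[OF assms(1,2)] topspace_quotient_topology[symmetric] assms(3)] .

type_synonym pointR = "((nat \<times> nat) \<times> ((nat \<Rightarrow> nat) \<times> (nat \<Rightarrow> bool))) \<times> (nat \<Rightarrow> real)"
type_synonym pointC = "(nat \<Rightarrow> int) \<times> (nat \<Rightarrow> real)"

lemma topspace_XM_top [simp]: "topspace (XM_top m) = (\<Pi>\<^sub>E i\<in>{..<m}. UNIV)"
  by (simp add: XM_top_def)

lemma Hausdorff_space_XM_top: "Hausdorff_space (XM_top m)"
  by (simp add: XM_top_def Hausdorff_space_product_topology)

lemma locally_compact_space_XM_top: "locally_compact_space (XM_top m)"
  by (simp add: XM_top_def locally_compact_space_product_topology locally_compact_space_euclidean)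

lemma continuous_map_XM_top_coordinate: "j < m \<Longrightarrow> continuous_map (XM_top m) euclideanreal (\<lambda>t. t j)"
  using continuous_map_product_projection[of j "{..<m}" "\<lambda>_. euclideanreal"] by (simp add: XM_top_def)

lemma continuous_map_into_XM_top:
  "continuous_map X (XM_top m) f \<longleftrightarrow>
     f ` topspace X \<subseteq> extensional {..<m} \<and> (\<forall>j<m. continuous_map X euclideanreal (\<lambda>x. f x j))"
  unfolding XM_top_def continuous_map_componentwise by (simp add: Ball_def)

lemma continuous_map_XM_top_reindex:
  assumes "\<And>i. i < m \<Longrightarrow> \<beta> i < m" and "\<And>i. m \<le> i \<Longrightarrow> \<beta> i = i"
  shows "continuous_map (XM_top m) (XM_top m) (\<lambda>t. t \<circ> \<beta>)"
  unfolding continuous_map_into_XM_top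
  using assms by (auto simp: extensional_def PiE_def continuous_map_XM_top_coordinate)

lemma topspace_preR_top:
  "(((q, r), (a, e)), t) \<in> topspace (preR_top n) \<longleftrightarrow>
     2*q + r = n \<and> a \<in> {..<q} \<rightarrow>\<^sub>E {1..} \<and> e \<in> {..<r} \<rightarrow>\<^sub>E UNIV \<and> t \<in> (\<Pi>\<^sub>E i\<in>{..<q+r}. UNIV)"
  by (auto simp: preR_top_def levi_dataR_def)

lemma Hausdorff_space_preR_top: "Hausdorff_space (preR_top n)"
  unfolding preR_top_def by (rule Hausdorff_space_sum_topology) (auto simp: Hausdorff_space_XM_top)

lemma locally_compact_space_preR_top: "locally_compact_space (preR_top n)"
  unfolding preR_top_def by (auto simp: locally_compact_space_sum_topology locally_compact_space_XM_top)

lemma Hausdorff_space_preC_top: "Hausdorff_space (preC_top n)"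
  unfolding preC_top_def by (rule Hausdorff_space_sum_topology) (simp add: Hausdorff_space_XM_top)

lemma locally_compact_space_preC_top: "locally_compact_space (preC_top n)"
  unfolding preC_top_def by (simp add: locally_compact_space_sum_topology locally_compact_space_XM_top)

lemma PiE_comp_permutes: "\<lbrakk>f \<in> S \<rightarrow>\<^sub>E B; \<pi> permutes S\<rbrakk> \<Longrightarrow> f \<circ> \<pi> \<in> S \<rightarrow>\<^sub>E B"
  by (auto simp: PiE_iff extensional_def permutes_in_image permutes_not_in)

lemma block_perm_id [simp]: "block_perm q r id id = id"
  by (auto simp: block_perm_def)

lemma block_perm_less:
  assumes "\<pi> permutes {..<q}" "\<rho> permutes {..<r}" "i < q + r"
  shows "block_perm q r \<pi> \<rho> i < q + r"
  using assms permutes_in_image[OF assms(1), of i] permutes_in_image[OF assms(2), of "i - q"]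
  by (auto simp: block_perm_def)

lemma block_perm_eq_self: "q + r \<le> i \<Longrightarrow> block_perm q r \<pi> \<rho> i = i"
  by (simp add: block_perm_def)

lemma block_perm_comp:
  assumes "\<pi>' permutes {..<q}" "\<rho>' permutes {..<r}"
  shows "block_perm q r \<pi> \<rho> \<circ> block_perm q r \<pi>' \<rho>' = block_perm q r (\<pi> \<circ> \<pi>') (\<rho> \<circ> \<rho>')"
proof
  fix i
  have "\<pi>' i < q" if "i < q"
    using permutes_in_image[OF assms(1)] that by auto
  moreover have "\<rho>' (i - q) < r" if "q \<le> i" "i < q + r"
    using permutes_in_image[OF assms(2)] that by auto
  ultimately show "(block_perm q r \<pi> \<rho> \<circ> block_perm q r \<pi>' \<rho>') i = block_perm q r (\<pi> \<circ> \<pi>') (\<rho> \<circ> \<rho>') i"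
    by (auto simp: block_perm_def)
qed

text \<open>The identity off the components of the Levi subgroup \<open>(q, r)\<close>, so that every element of
  \<open>W(M)\<close> acts by a homeomorphism of the whole disjoint union.\<close>

definition actR :: "nat \<Rightarrow> nat \<Rightarrow> (nat \<Rightarrow> nat) \<Rightarrow> (nat \<Rightarrow> nat) \<Rightarrow> pointR \<Rightarrow> pointR" where
  "actR q r \<pi> \<rho> x = (case x of (((q', r'), (a, e)), t) \<Rightarrow>
     if q' = q \<and> r' = r then (((q, r), (a \<circ> \<pi>, e \<circ> \<rho>)), t \<circ> block_perm q r \<pi> \<rho>) else x)"

lemma actR_id [simp]: "actR q r id id x = x"
  by (auto simp: actR_def split: prod.splits)

lemma actR_actR:
  assumes "\<pi>' permutes {..<q}" "\<rho>' permutes {..<r}"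
  shows "actR q r \<pi>' \<rho>' (actR q r \<pi> \<rho> x) = actR q r (\<pi> \<circ> \<pi>') (\<rho> \<circ> \<rho>') x"
  using block_perm_comp[OF assms, of \<pi> \<rho>]
  by (auto simp: actR_def comp_assoc split: prod.splits)

lemma actR_inv_actR:
  assumes "\<pi> permutes {..<q}" "\<rho> permutes {..<r}"
  shows "actR q r (inv \<pi>) (inv \<rho>) (actR q r \<pi> \<rho> x) = x" and "actR q r \<pi> \<rho> (actR q r (inv \<pi>) (inv \<rho>) x) = x"
  using assms actR_actR[OF permutes_inv permutes_inv] actR_actR
  by (simp_all add: permutes_inv_o)

lemma fst_fst_actR [simp]: "fst (fst (actR q r \<pi> \<rho> x)) = fst (fst x)"
  by (simp add: actR_def split: prod.splits)

lemma WR_rel_iff_actR: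
  "WR_rel x y \<longleftrightarrow>
     (\<exists>q r \<pi> \<rho>. fst (fst x) = (q, r) \<and> \<pi> permutes {..<q} \<and> \<rho> permutes {..<r} \<and> y = actR q r \<pi> \<rho> x)"
  by (auto simp: WR_rel_def actR_def split: prod.splits)

lemma equivp_WR_rel: "equivp WR_rel"
proof (rule equivpI)
  show "reflp WR_rel"
  proof (rule reflpI)
    fix x :: pointR
    show "WR_rel x x"
      unfolding WR_rel_iff_actR
      by (intro exI[of _ "fst (fst (fst x))"] exI[of _ "snd (fst (fst x))"] exI[of _ id]) simp
  qed
  show "symp WR_rel"
  proof (rule sympI)
    fix x y assume "WR_rel x y"
    then obtain q r \<pi> \<rho> where qr: "fst (fst x) = (q, r)" and perm: "\<pi> permutes {..<q}" "\<rho> permutes {..<r}"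
      and y: "y = actR q r \<pi> \<rho> x"
      unfolding WR_rel_iff_actR by blast
    have "fst (fst y) = (q, r)" "x = actR q r (inv \<pi>) (inv \<rho>) y"
      using qr actR_inv_actR(1)[OF perm] by (simp_all add: y)
    then show "WR_rel y x"
      unfolding WR_rel_iff_actR using permutes_inv[OF perm(1)] permutes_inv[OF perm(2)] by blast
  qed
  show "transp WR_rel"
  proof (rule transpI)
    fix x y z assume "WR_rel x y" "WR_rel y z"
    then obtain q r \<pi> \<rho> where qr: "fst (fst x) = (q, r)" and perm: "\<pi> permutes {..<q}" "\<rho> permutes {..<r}"
      and y: "y = actR q r \<pi> \<rho> x"
      unfolding WR_rel_iff_actR by blast
    moreover have "fst (fst y) = (q, r)"
      using qr by (simp add: y)
    with \<open>WR_rel y z\<close> obtain \<pi>' \<rho>' where perm': "\<pi>' permutes {..<q}" "\<rho>' permutes {..<r}"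
      and z: "z = actR q r \<pi>' \<rho>' y"
      unfolding WR_rel_iff_actR by auto
    ultimately show "WR_rel x z"
      unfolding WR_rel_iff_actR
      using actR_actR[OF perm'] permutes_compose[OF perm'(1) perm(1)] permutes_compose[OF perm'(2) perm(2)] by blast
  qed
qed

lemma orbitR_eq_iff: "orbitR x = orbitR y \<longleftrightarrow> WR_rel x y"
  unfolding orbitR_def using equivp_WR_rel[unfolded equivp_def] by (metis Collect_inj)

definition GR :: "nat \<Rightarrow> (pointR \<Rightarrow> pointR) set" where
  "GR n = {actR q r \<pi> \<rho> | q r \<pi> \<rho>. 2*q + r = n \<and> \<pi> permutes {..<q} \<and> \<rho> permutes {..<r}}"

lemma finite_GR: "finite (GR n)"
proof -
  let ?params = "SIGMA q:{..n}. SIGMA r:{..n}. {\<pi>. \<pi> permutes {..<q}} \<times> {\<rho>. \<rho> permutes {..<r}}"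
  have "GR n \<subseteq> (\<lambda>(q, r, \<pi>, \<rho>). actR q r \<pi> \<rho>) ` ?params"
  proof
    fix g assume "g \<in> GR n"
    then obtain q r \<pi> \<rho> where "g = actR q r \<pi> \<rho>" "2*q + r = n" "\<pi> permutes {..<q}" "\<rho> permutes {..<r}"
      unfolding GR_def by blast
    then show "g \<in> (\<lambda>(q, r, \<pi>, \<rho>). actR q r \<pi> \<rho>) ` ?params"
      by (intro image_eqI[where x = "(q, r, \<pi>, \<rho>)"]) auto
  qed
  moreover have "finite ?params"
    by (intro finite_SigmaI finite_cartesian_product finite_permutations) auto
  ultimately show ?thesis
    using finite_surj by blast
qed

lemma continuous_map_actR:
  assumes "\<pi> permutes {..<q}" "\<rho> permutes {..<r}"
  shows "continuous_map (preR_top n) (preR_top n) (actR q r \<pi> \<rho>)"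
  unfolding preR_top_def
proof (rule continuous_map_from_sum_topology)
  let ?X = "\<lambda>((q, r), _). XM_top (q + r)"
  fix i assume i: "i \<in> levi_dataR n"
  obtain q' r' a e where i_eq: "i = ((q', r'), (a, e))"
    by (metis prod.collapse)
  show "continuous_map (?X i) (sum_topology ?X (levi_dataR n)) (\<lambda>t. actR q r \<pi> \<rho> (i, t))"
  proof (cases "q' = q \<and> r' = r")
    case True
    let ?i' = "((q, r), (a \<circ> \<pi>, e \<circ> \<rho>))"
    from i True have "a \<in> {..<q} \<rightarrow>\<^sub>E {1..}" "e \<in> {..<r} \<rightarrow>\<^sub>E UNIV" "2*q + r = n"
      by (auto simp: i_eq levi_dataR_def)
    then have "?i' \<in> levi_dataR n"
      using assms by (simp add: levi_dataR_def PiE_comp_permutes)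
    then have "continuous_map (XM_top (q + r)) (sum_topology ?X (levi_dataR n)) (Pair ?i')"
      using continuous_map_component_injection[of ?i' _ ?X] by simp
    moreover have "continuous_map (XM_top (q + r)) (XM_top (q + r)) (\<lambda>t. t \<circ> block_perm q r \<pi> \<rho>)"
      by (rule continuous_map_XM_top_reindex) (auto simp: block_perm_less[OF assms] block_perm_eq_self)
    ultimately have "continuous_map (XM_top (q + r)) (sum_topology ?X (levi_dataR n))
                       (Pair ?i' \<circ> (\<lambda>t. t \<circ> block_perm q r \<pi> \<rho>))"
      by (rule continuous_map_compose[rotated])
    moreover have "Pair ?i' \<circ> (\<lambda>t. t \<circ> block_perm q r \<pi> \<rho>) = (\<lambda>t. actR q r \<pi> \<rho> (i, t))"
      using True by (simp add: i_eq actR_def fun_eq_iff)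
    ultimately show ?thesis
      using True by (simp add: i_eq)
  next
    case False
    then show ?thesis
      using continuous_map_component_injection[OF i, of ?X] by (auto simp: i_eq actR_def)
  qed
qed

lemma homeomorphic_map_GR:
  assumes "g \<in> GR n"
  shows "homeomorphic_map (preR_top n) (preR_top n) g"
proof -
  obtain q r \<pi> \<rho> where g: "g = actR q r \<pi> \<rho>" and perm: "\<pi> permutes {..<q}" "\<rho> permutes {..<r}"
    using assms unfolding GR_def by blast
  have "homeomorphic_maps (preR_top n) (preR_top n) g (actR q r (inv \<pi>) (inv \<rho>))"
    unfolding homeomorphic_maps_def g
    using perm by (simp add: continuous_map_actR permutes_inv actR_inv_actR)
  then show ?thesis
    by (rule homeomorphic_maps_imp_map)
qed

lemma orbitR_eq_iff_GR:
  assumes "x \<in> topspace (preR_top n)"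
  shows "orbitR x = orbitR y \<longleftrightarrow> (\<exists>g\<in>GR n. y = g x)"
proof -
  obtain q r a e t where x: "x = (((q, r), (a, e)), t)"
    by (metis prod.collapse)
  then have qr: "fst (fst x) = (q, r)"
    by simp
  have n: "2*q + r = n"
    using assms by (simp add: x topspace_preR_top)
  have "WR_rel x y \<longleftrightarrow> (\<exists>g\<in>GR n. y = g x)"
  proof
    assume "WR_rel x y"
    then obtain \<pi> \<rho> where "\<pi> permutes {..<q}" "\<rho> permutes {..<r}" "y = actR q r \<pi> \<rho> x"
      unfolding WR_rel_iff_actR qr by force
    with n show "\<exists>g\<in>GR n. y = g x"
      unfolding GR_def by blast
  next
    assume "\<exists>g\<in>GR n. y = g x"
    then obtain q' r' \<pi> \<rho> where perm: "\<pi> permutes {..<q'}" "\<rho> permutes {..<r'}"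
      and y: "y = actR q' r' \<pi> \<rho> x"
      unfolding GR_def by blast
    show "WR_rel x y"
    proof (cases "q' = q \<and> r' = r")
      case True
      with perm y show ?thesis
        unfolding WR_rel_iff_actR qr by blast
    next
      case False
      then have "y = actR q r id id x"
        using y by (auto simp: x actR_def)
      then show ?thesis
        unfolding WR_rel_iff_actR qr using permutes_id by blast
    qed
  qed
  then show ?thesis
    by (simp add: orbitR_eq_iff)
qed

lemma Hausdorff_space_tempR: "Hausdorff_space (tempR n)"
  unfolding tempR_def
  using finite_GR homeomorphic_map_GR orbitR_eq_iff_GR Hausdorff_space_preR_top
  by (rule Hausdorff_space_orbit_quotient)

lemma locally_compact_space_tempR: "locally_compact_space (tempR n)"
  unfolding tempR_def
  using homeomorphic_map_GR orbitR_eq_iff_GR locally_compact_space_preR_top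
  by (rule locally_compact_space_orbit_quotient)

definition actC :: "(nat \<Rightarrow> nat) \<Rightarrow> pointC \<Rightarrow> pointC" where
  "actC \<pi> x = (fst x \<circ> \<pi>, snd x \<circ> \<pi>)"

lemma actC_id [simp]: "actC id x = x"
  by (simp add: actC_def)

lemma actC_actC: "actC \<pi>' (actC \<pi> x) = actC (\<pi> \<circ> \<pi>') x"
  by (simp add: actC_def comp_assoc)

lemma actC_inv_actC:
  assumes "\<pi> permutes S"
  shows "actC (inv \<pi>) (actC \<pi> x) = x" and "actC \<pi> (actC (inv \<pi>) x) = x"
  by (simp_all add: actC_actC permutes_inv_o[OF assms])

lemma WC_rel_iff_actC: "WC_rel n x y \<longleftrightarrow> (\<exists>\<pi>. \<pi> permutes {..<n} \<and> y = actC \<pi> x)"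
  by (auto simp: WC_rel_def actC_def split: prod.splits)

lemma equivp_WC_rel: "equivp (WC_rel n)"
proof (rule equivpI)
  show "reflp (WC_rel n)"
    by (rule reflpI) (metis WC_rel_iff_actC actC_id permutes_id)
  show "symp (WC_rel n)"
    by (rule sympI) (metis WC_rel_iff_actC actC_inv_actC(1) permutes_inv)
  show "transp (WC_rel n)"
    by (rule transpI) (metis WC_rel_iff_actC actC_actC permutes_compose)
qed

lemma orbitC_eq_iff: "orbitC n x = orbitC n y \<longleftrightarrow> WC_rel n x y"
  unfolding orbitC_def using equivp_WC_rel[unfolded equivp_def] by (metis Collect_inj)

definition GC :: "nat \<Rightarrow> (pointC \<Rightarrow> pointC) set" where
  "GC n = actC ` {\<pi>. \<pi> permutes {..<n}}"

lemma finite_GC: "finite (GC n)"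
  by (simp add: GC_def finite_permutations)

lemma continuous_map_actC:
  assumes "\<pi> permutes {..<n}"
  shows "continuous_map (preC_top n) (preC_top n) (actC \<pi>)"
  unfolding preC_top_def
proof (rule continuous_map_from_sum_topology)
  fix k assume "k \<in> levi_dataC n"
  then have "k \<circ> \<pi> \<in> levi_dataC n"
    unfolding levi_dataC_def using assms by (rule PiE_comp_permutes)
  then have "continuous_map (XM_top n) (sum_topology (\<lambda>_. XM_top n) (levi_dataC n)) (Pair (k \<circ> \<pi>))"
    by (rule continuous_map_component_injection)
  moreover have "continuous_map (XM_top n) (XM_top n) (\<lambda>t. t \<circ> \<pi>)"
    using assms by (intro continuous_map_XM_top_reindex) (auto simp: permutes_not_in permutes_in_image[OF assms, simplified])
  ultimately have "continuous_map (XM_top n) (sum_topology (\<lambda>_. XM_top n) (levi_dataC n))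
                     (Pair (k \<circ> \<pi>) \<circ> (\<lambda>t. t \<circ> \<pi>))"
    by (rule continuous_map_compose[rotated])
  then show "continuous_map (XM_top n) (sum_topology (\<lambda>_. XM_top n) (levi_dataC n)) (\<lambda>t. actC \<pi> (k, t))"
    by (simp add: actC_def o_def)
qed

lemma homeomorphic_map_GC:
  assumes "g \<in> GC n"
  shows "homeomorphic_map (preC_top n) (preC_top n) g"
proof -
  obtain \<pi> where g: "g = actC \<pi>" and perm: "\<pi> permutes {..<n}"
    using assms unfolding GC_def by blast
  have "homeomorphic_maps (preC_top n) (preC_top n) g (actC (inv \<pi>))"
    unfolding homeomorphic_maps_def g
    using perm by (simp add: continuous_map_actC permutes_inv actC_inv_actC)
  then show ?thesis
    by (rule homeomorphic_maps_imp_map)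
qed

lemma orbitC_eq_iff_GC: "orbitC n x = orbitC n y \<longleftrightarrow> (\<exists>g\<in>GC n. y = g x)"
  by (auto simp: orbitC_eq_iff WC_rel_iff_actC GC_def)

lemma Hausdorff_space_tempC: "Hausdorff_space (tempC n)"
  unfolding tempC_def
  using finite_GC homeomorphic_map_GC orbitC_eq_iff_GC Hausdorff_space_preC_top
  by (rule Hausdorff_space_orbit_quotient)

lemma locally_compact_space_tempC: "locally_compact_space (tempC n)"
  unfolding tempC_def
  using homeomorphic_map_GC orbitC_eq_iff_GC locally_compact_space_preC_top
  by (rule locally_compact_space_orbit_quotient)

text \<open>The permutation of the \<open>2q + r\<close> torus coordinates induced by \<open>(\<pi>, \<rho>) \<in> W(M)\<close>:
  \<open>\<pi>\<close> moves the pairs \<open>(2i, 2i + 1)\<close> coming from the \<open>GL(2)\<close>-blocks, \<open>\<rho>\<close> the last \<open>r\<close> coordinates.\<close>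

definition bc_perm :: "nat \<Rightarrow> nat \<Rightarrow> (nat \<Rightarrow> nat) \<Rightarrow> (nat \<Rightarrow> nat) \<Rightarrow> nat \<Rightarrow> nat" where
  "bc_perm q r \<pi> \<rho> i =
     (if i < 2*q then 2 * \<pi> (i div 2) + i mod 2 else if i < 2*q + r then 2*q + \<rho> (i - 2*q) else i)"

lemma bc_perm_pair:
  assumes "\<pi> permutes {..<q}" "i < 2*q"
  shows "bc_perm q r \<pi> \<rho> i < 2*q" "bc_perm q r \<pi> \<rho> i div 2 = \<pi> (i div 2)"
    "bc_perm q r \<pi> \<rho> i mod 2 = i mod 2"
proof -
  have "\<pi> (i div 2) < q"
    using permutes_in_image[OF assms(1), of "i div 2"] assms(2) by auto
  then show "bc_perm q r \<pi> \<rho> i < 2*q" "bc_perm q r \<pi> \<rho> i div 2 = \<pi> (i div 2)"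
    "bc_perm q r \<pi> \<rho> i mod 2 = i mod 2"
    using assms(2) by (auto simp: bc_perm_def)
qed

lemma bc_perm_single:
  assumes "\<rho> permutes {..<r}" "2*q \<le> i" "i < 2*q + r"
  shows "bc_perm q r \<pi> \<rho> i = 2*q + \<rho> (i - 2*q)" "\<rho> (i - 2*q) < r"
  using assms permutes_in_image[OF assms(1), of "i - 2*q"] by (auto simp: bc_perm_def)

lemma bc_perm_eq_self: "2*q + r \<le> i \<Longrightarrow> bc_perm q r \<pi> \<rho> i = i"
  by (simp add: bc_perm_def)

lemma bc_perm_id [simp]: "bc_perm q r id id = id"
  by (auto simp: bc_perm_def fun_eq_iff)

lemma bc_perm_comp:
  assumes "\<pi>' permutes {..<q}" "\<rho>' permutes {..<r}"
  shows "bc_perm q r \<pi> \<rho> \<circ> bc_perm q r \<pi>' \<rho>' = bc_perm q r (\<pi> \<circ> \<pi>') (\<rho> \<circ> \<rho>')"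
proof
  fix i
  consider "i < 2*q" | "2*q \<le> i" "i < 2*q + r" | "2*q + r \<le> i"
    by linarith
  then show "(bc_perm q r \<pi> \<rho> \<circ> bc_perm q r \<pi>' \<rho>') i = bc_perm q r (\<pi> \<circ> \<pi>') (\<rho> \<circ> \<rho>') i"
  proof cases
    case 1
    then show ?thesis
      using bc_perm_pair[OF assms(1) 1] by (simp add: bc_perm_def[of _ _ \<pi>] bc_perm_def[of _ _ "\<pi> \<circ> \<pi>'"])
  next
    case 2
    then show ?thesis
      using bc_perm_single[OF assms(2) 2] by (simp add: bc_perm_def[of _ _ \<pi>] bc_perm_def[of _ _ "\<pi> \<circ> \<pi>'"])
  qed (simp add: bc_perm_eq_self)
qed

lemma bc_perm_permutes:
  assumes "\<pi> permutes {..<q}" "\<rho> permutes {..<r}"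
  shows "bc_perm q r \<pi> \<rho> permutes {..<2*q + r}"
  unfolding permutes_def
proof (intro conjI allI impI)
  let ?inv = "bc_perm q r (inv \<pi>) (inv \<rho>)"
  have left: "?inv \<circ> bc_perm q r \<pi> \<rho> = id" and right: "bc_perm q r \<pi> \<rho> \<circ> ?inv = id"
    using bc_perm_comp[OF assms, of "inv \<pi>" "inv \<rho>"] bc_perm_comp[OF permutes_inv[OF assms(1)] permutes_inv[OF assms(2)]]
    by (simp_all add: permutes_inv_o[OF assms(1)] permutes_inv_o[OF assms(2)])
  fix y
  show "\<exists>!x. bc_perm q r \<pi> \<rho> x = y"
    using left right by (metis comp_apply id_apply)
qed (simp add: bc_perm_eq_self)

lemma bc_pre_actR:
  assumes perm: "\<pi> permutes {..<q}" "\<rho> permutes {..<r}"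
  shows "bc_pre (actR q r \<pi> \<rho> (((q, r), (a, e)), t)) = actC (bc_perm q r \<pi> \<rho>) (bc_pre (((q, r), (a, e)), t))"
proof -
  let ?x = "(((q, r), (a, e)), t)" and ?s = "bc_perm q r \<pi> \<rho>"
  have "fst (bc_pre (actR q r \<pi> \<rho> ?x)) i = fst (bc_pre ?x) (?s i) \<and>
        snd (bc_pre (actR q r \<pi> \<rho> ?x)) i = snd (bc_pre ?x) (?s i)" for i
  proof -
    consider "i < 2*q" | "2*q \<le> i" "i < 2*q + r" | "2*q + r \<le> i"
      by linarith
    then show ?thesis
    proof cases
      case 1
      then have "i div 2 < q"
        by auto
      then have "block_perm q r \<pi> \<rho> (i div 2) = \<pi> (i div 2)"
        by (simp add: block_perm_def)
      with 1 bc_perm_pair[OF perm(1) 1, of r \<rho>] show ?thesis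
        by (simp add: bc_pre_def actR_def even_iff_mod_2_eq_zero)
    next
      case 2
      then have "q \<le> i - q" "i - q < q + r"
        by auto
      then have "block_perm q r \<pi> \<rho> (i - q) = q + \<rho> (i - 2*q)"
        by (simp add: block_perm_def mult_2)
      with 2 bc_perm_single[OF perm(2) 2] show ?thesis
        by (simp add: bc_pre_def actR_def)
    next
      case 3
      then show ?thesis
        by (simp add: bc_pre_def actR_def bc_perm_eq_self)
    qed
  qed
  then show ?thesis
    by (simp add: actC_def prod_eq_iff fun_eq_iff)
qed

lemma WC_rel_bc_pre:
  assumes "WR_rel x y" "x \<in> topspace (preR_top n)"
  shows "WC_rel n (bc_pre x) (bc_pre y)"
proof -
  obtain q r a e t where x: "x = (((q, r), (a, e)), t)"
    by (metis prod.collapse)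
  then have "fst (fst x) = (q, r)"
    by simp
  with assms(1) obtain \<pi> \<rho> where perm: "\<pi> permutes {..<q}" "\<rho> permutes {..<r}"
    and y: "y = actR q r \<pi> \<rho> x"
    unfolding WR_rel_iff_actR by force
  have "2*q + r = n"
    using assms(2) by (simp add: x topspace_preR_top)
  then show ?thesis
    unfolding WC_rel_iff_actC y x bc_pre_actR[OF perm]
    using bc_perm_permutes[OF perm] by blast
qed

lemma BC_orbitR:
  assumes "x \<in> topspace (preR_top n)"
  shows "BC n (orbitR x) = orbitC n (bc_pre x)"
proof (rule antisym)
  show "BC n (orbitR x) \<subseteq> orbitC n (bc_pre x)"
  proof
    fix z assume "z \<in> BC n (orbitR x)"
    then obtain x' where "WR_rel x x'" "WC_rel n (bc_pre x') z"
      by (auto simp: BC_def orbitR_def)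
    then show "z \<in> orbitC n (bc_pre x)"
      using WC_rel_bc_pre[OF _ assms] equivp_transp[OF equivp_WC_rel] unfolding orbitC_def by blast
  qed
  show "orbitC n (bc_pre x) \<subseteq> BC n (orbitR x)"
    unfolding BC_def orbitR_def orbitC_def using equivp_reflp[OF equivp_WR_rel, of x] by blast
qed

lemma continuous_map_snd_bc_pre:
  assumes n: "2*q + r = n"
  shows "continuous_map (XM_top (q + r)) (XM_top n) (\<lambda>t. snd (bc_pre (((q, r), (a, e)), t)))"
  unfolding continuous_map_into_XM_top
proof (intro conjI allI impI)
  show "(\<lambda>t. snd (bc_pre (((q, r), (a, e)), t))) ` topspace (XM_top (q + r)) \<subseteq> extensional {..<n}"
    using n by (auto simp: bc_pre_def extensional_def)
  fix j assume "j < n"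
  show "continuous_map (XM_top (q + r)) euclideanreal (\<lambda>t. snd (bc_pre (((q, r), (a, e)), t)) j)"
  proof (cases "j < 2*q")
    case True
    then have "continuous_map (XM_top (q + r)) euclideanreal (\<lambda>t. 2 * t (j div 2))"
      by (intro continuous_map_real_mult_left continuous_map_XM_top_coordinate) auto
    with True show ?thesis
      by (simp add: bc_pre_def)
  next
    case False
    with \<open>j < n\<close> n have "continuous_map (XM_top (q + r)) euclideanreal (\<lambda>t. 2 * t (j - q))"
      by (intro continuous_map_real_mult_left continuous_map_XM_top_coordinate) auto
    with False \<open>j < n\<close> n show ?thesis
      by (simp add: bc_pre_def)
  qed
qed

lemma continuous_map_bc_pre: "continuous_map (preR_top n) (preC_top n) bc_pre"
  unfolding preR_top_def
proof (rule continuous_map_from_sum_topology)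
  fix i assume i: "i \<in> levi_dataR n"
  obtain q r a e where i_eq: "i = ((q, r), (a, e))"
    by (metis prod.collapse)
  with i have n: "2*q + r = n"
    by (simp add: levi_dataR_def)
  define k :: "nat \<Rightarrow> int" where "k = fst (bc_pre (i, undefined))"
  have "k \<in> levi_dataC n"
    unfolding levi_dataC_def PiE_iff extensional_def using n by (simp add: k_def i_eq bc_pre_def)
  then have "continuous_map (XM_top n) (preC_top n) (Pair k)"
    unfolding preC_top_def by (rule continuous_map_component_injection)
  then have "continuous_map (XM_top (q + r)) (preC_top n) (Pair k \<circ> (\<lambda>t. snd (bc_pre (i, t))))"
    using continuous_map_snd_bc_pre[OF n] unfolding i_eq by (rule continuous_map_compose[rotated])
  moreover have "Pair k \<circ> (\<lambda>t. snd (bc_pre (i, t))) = (\<lambda>t. bc_pre (i, t))"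
    by (simp add: k_def i_eq bc_pre_def fun_eq_iff)
  ultimately show "continuous_map ((\<lambda>((q, r), _). XM_top (q + r)) i) (preC_top n) (\<lambda>t. bc_pre (i, t))"
    by (simp add: i_eq)
qed

lemma continuous_map_orbitC_bc_pre: "continuous_map (preR_top n) (tempC n) (orbitC n \<circ> bc_pre)"
  using continuous_map_bc_pre quotient_imp_continuous_map[OF quotient_map_quotient_topology]
  unfolding tempC_def by (rule continuous_map_compose)

lemma continuous_map_BC: "continuous_map (tempR n) (tempC n) (BC n)"
proof -
  have "continuous_map (preR_top n) (tempC n) (BC n \<circ> orbitR)"
    using continuous_map_orbitC_bc_pre by (rule continuous_map_eq) (simp add: BC_orbitR)
  then show ?thesis
    unfolding tempR_def using continuous_compose_quotient_map[OF quotient_map_quotient_topology] by blast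
qed

definition normC :: "nat \<Rightarrow> pointC \<Rightarrow> real" where
  "normC n x = (\<Sum>j<n. \<bar>real_of_int (fst x j)\<bar> + \<bar>snd x j\<bar>)"

text \<open>Junk on the empty set; on an orbit the choice does not matter, by \<open>normC_actC\<close>.\<close>

definition normC_orbit :: "nat \<Rightarrow> pointC set \<Rightarrow> real" where
  "normC_orbit n Y = normC n (SOME y. y \<in> Y)"

lemma normC_actC: "\<pi> permutes {..<n} \<Longrightarrow> normC n (actC \<pi> x) = normC n x"
  unfolding normC_def actC_def
  using sum.permute[of \<pi> "{..<n}" "\<lambda>j. \<bar>real_of_int (fst x j)\<bar> + \<bar>snd x j\<bar>"] by (simp add: o_def)

lemma normC_orbit_orbitC: "normC_orbit n (orbitC n x) = normC n x"
proof -
  have "x \<in> orbitC n x"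
    unfolding orbitC_def using equivp_reflp[OF equivp_WC_rel] by simp
  then have "(SOME y. y \<in> orbitC n x) \<in> orbitC n x"
    by (rule someI)
  then obtain \<pi> where "\<pi> permutes {..<n}" "(SOME y. y \<in> orbitC n x) = actC \<pi> x"
    unfolding orbitC_def WC_rel_iff_actC by blast
  then show ?thesis
    unfolding normC_orbit_def by (simp add: normC_actC)
qed

lemma continuous_map_normC: "continuous_map (preC_top n) euclideanreal (normC n)"
  unfolding preC_top_def normC_def
  by (intro continuous_map_from_sum_topology continuous_map_sum continuous_map_add continuous_map_real_abs
      continuous_map_XM_top_coordinate) (auto simp: continuous_map_XM_top_coordinate)

lemma continuous_map_normC_orbit: "continuous_map (tempC n) euclideanreal (normC_orbit n)"
proof -
  have "continuous_map (preC_top n) euclideanreal (normC_orbit n \<circ> orbitC n)"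
    using continuous_map_normC by (rule continuous_map_eq) (simp add: normC_orbit_orbitC)
  then show ?thesis
    unfolding tempC_def using continuous_compose_quotient_map[OF quotient_map_quotient_topology] by blast
qed

lemma normC_bc_pre_bounds:
  assumes "(((q, r), (a, e)), t) \<in> topspace (preR_top n)" and "normC n (bc_pre (((q, r), (a, e)), t)) \<le> B"
  shows "j < q \<Longrightarrow> real (a j) \<le> B" and "j < q + r \<Longrightarrow> \<bar>t j\<bar> \<le> B"
proof -
  have n: "2*q + r = n"
    using assms(1) by (simp add: topspace_preR_top)
  define f where "f j = \<bar>real_of_int (fst (bc_pre (((q, r), (a, e)), t)) j)\<bar> + \<bar>snd (bc_pre (((q, r), (a, e)), t)) j\<bar>"
    for j
  have f_le: "f j \<le> B" if "j < n" for j
  proof -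
    have "f j \<le> (\<Sum>j<n. f j)"
      by (rule member_le_sum) (use that in \<open>auto simp: f_def\<close>)
    with assms(2) show ?thesis
      by (simp add: normC_def f_def)
  qed
  have pair: "real (a j) + 2 * \<bar>t j\<bar> \<le> B" if "j < q" for j
    using f_le[of "2*j"] that n by (simp add: f_def bc_pre_def)
  have single: "2 * \<bar>t j\<bar> \<le> B" if "q \<le> j" "j < q + r" for j
    using f_le[of "j + q"] that n by (simp add: f_def bc_pre_def)
  show "j < q \<Longrightarrow> real (a j) \<le> B"
    using pair[of j] by simp
  show "j < q + r \<Longrightarrow> \<bar>t j\<bar> \<le> B"
    using pair[of j] single[of j] by (cases "j < q") auto
qed

lemma finite_levi_dataR_bounded: "finite {i \<in> levi_dataR n. \<forall>j < fst (fst i). real (fst (snd i) j) \<le> B}"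
proof (rule finite_subset)
  let ?M = "nat \<lfloor>B\<rfloor>"
  show "{i \<in> levi_dataR n. \<forall>j < fst (fst i). real (fst (snd i) j) \<le> B} \<subseteq>
          (SIGMA (q, r):{..n} \<times> {..n}. ({..<q} \<rightarrow>\<^sub>E {..?M}) \<times> ({..<r} \<rightarrow>\<^sub>E UNIV))"
  proof
    fix i assume i: "i \<in> {i \<in> levi_dataR n. \<forall>j < fst (fst i). real (fst (snd i) j) \<le> B}"
    obtain q r a e where i_eq: "i = ((q, r), (a, e))"
      by (metis prod.collapse)
    with i have "2*q + r = n" "a \<in> {..<q} \<rightarrow>\<^sub>E {1..}" "e \<in> {..<r} \<rightarrow>\<^sub>E UNIV" "\<forall>j<q. real (a j) \<le> B"
      by (auto simp: levi_dataR_def)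
    then have "q \<le> n" "r \<le> n" "a \<in> {..<q} \<rightarrow>\<^sub>E {..?M}" "e \<in> {..<r} \<rightarrow>\<^sub>E UNIV"
      by (auto simp: PiE_iff le_nat_floor)
    then show "i \<in> (SIGMA (q, r):{..n} \<times> {..n}. ({..<q} \<rightarrow>\<^sub>E {..?M}) \<times> ({..<r} \<rightarrow>\<^sub>E UNIV))"
      by (simp add: i_eq)
  qed
  show "finite (SIGMA (q, r):{..n} \<times> {..n}. ({..<q} \<rightarrow>\<^sub>E {..?M}) \<times> ({..<r} \<rightarrow>\<^sub>E (UNIV :: bool set)))"
    by (intro finite_SigmaI) (auto intro!: finite_cartesian_product finite_PiE)
qed

lemma compactin_bc_pre_sublevel:
  "compactin (preR_top n) {x \<in> topspace (preR_top n). normC n (bc_pre x) \<le> B}"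
proof (rule closed_compactin)
  define J where "J = {i \<in> levi_dataR n. \<forall>j < fst (fst i). real (fst (snd i) j) \<le> B}"
  define S where "S i = (\<Pi>\<^sub>E j\<in>{..<fst (fst i) + snd (fst i)}. {-B..B})"
    for i :: "(nat \<times> nat) \<times> (nat \<Rightarrow> nat) \<times> (nat \<Rightarrow> bool)"
  show "compactin (preR_top n) (Sigma J S)"
    unfolding preR_top_def
  proof (rule compactin_sum_topology_Sigma)
    show "finite J"
      unfolding J_def by (rule finite_levi_dataR_bounded)
    show "J \<subseteq> levi_dataR n"
      by (auto simp: J_def)
    show "compactin ((\<lambda>((q, r), _). XM_top (q + r)) i) (S i)" for i
      by (auto simp: S_def XM_top_def compactin_PiE split: prod.splits)
  qed
  show "{x \<in> topspace (preR_top n). normC n (bc_pre x) \<le> B} \<subseteq> Sigma J S"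
  proof
    fix x assume "x \<in> {x \<in> topspace (preR_top n). normC n (bc_pre x) \<le> B}"
    moreover obtain q r a e t where x_eq: "x = (((q, r), a, e), t)"
      by (metis prod.collapse)
    ultimately have x: "(((q, r), a, e), t) \<in> topspace (preR_top n)"
      and bounds: "j < q \<Longrightarrow> real (a j) \<le> B" "j < q + r \<Longrightarrow> \<bar>t j\<bar> \<le> B" for j
      using normC_bc_pre_bounds by auto
    have "t j \<in> {-B..B}" if "j < q + r" for j
      using bounds(2)[OF that] by (auto simp: abs_le_iff)
    with x have "t \<in> S ((q, r), a, e)"
      by (auto simp: S_def topspace_preR_top PiE_iff)
    moreover from x have "((q, r), a, e) \<in> J"
      using bounds(1) by (auto simp: J_def topspace_preR_top levi_dataR_def)
    ultimately show "x \<in> Sigma J S"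
      by (simp add: x_eq)
  qed
  have "continuous_map (preR_top n) euclideanreal (\<lambda>x. normC n (bc_pre x))"
    using continuous_map_compose[OF continuous_map_bc_pre continuous_map_normC] by (simp add: o_def)
  then show "closedin (preR_top n) {x \<in> topspace (preR_top n). normC n (bc_pre x) \<le> B}"
    using closedin_continuous_map_preimage[of _ euclideanreal _ "{..B}"] by (simp add: flip: closed_closedin)
qed

lemma compactin_BC_preimage:
  assumes "compactin (tempC n) K"
  shows "compactin (tempR n) {Y \<in> topspace (tempR n). BC n Y \<in> K}"
proof -
  have "bounded (normC_orbit n ` K)"
    using image_compactin[OF assms continuous_map_normC_orbit] by (simp add: compact_imp_bounded)
  then obtain B where B: "\<And>Y. Y \<in> K \<Longrightarrow> normC_orbit n Y \<le> B"
    unfolding bounded_real by (meson abs_le_D1 image_eqI)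
  define P where "P = {x \<in> topspace (preR_top n). orbitC n (bc_pre x) \<in> K}"
  have "compactin (preR_top n) P"
  proof (rule closed_compactin[OF compactin_bc_pre_sublevel[of n B]])
    show "P \<subseteq> {x \<in> topspace (preR_top n). normC n (bc_pre x) \<le> B}"
      using B[of "orbitC n (bc_pre _)"] by (auto simp: P_def normC_orbit_orbitC)
    have "closedin (tempC n) K"
      using Hausdorff_space_tempC assms by (rule compactin_imp_closedin)
    then show "closedin (preR_top n) P"
      unfolding P_def using closedin_continuous_map_preimage[OF continuous_map_orbitC_bc_pre] by simp
  qed
  then have "compactin (tempR n) (orbitR ` P)"
    using image_compactin quotient_imp_continuous_map[OF quotient_map_quotient_topology] unfolding tempR_def by blast
  moreover have "{Y \<in> topspace (tempR n). BC n Y \<in> K} = orbitR ` P"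
    by (auto simp: tempR_def P_def BC_orbitR)
  ultimately show ?thesis
    by simp
qed

lemma proper_map_BC: "proper_map (tempR n) (tempC n) (BC n)"
proof (rule compact_imp_proper_map)
  show "k_space (tempC n)"
    using locally_compact_space_tempC by (rule locally_compact_imp_k_space)
  show "kc_space (tempC n)"
    using Hausdorff_space_tempC by (rule Hausdorff_imp_kc_space)
  show "BC n \<in> topspace (tempR n) \<rightarrow> topspace (tempC n)"
    using continuous_map_BC by (rule continuous_map_funspace)
qed (use continuous_map_BC compactin_BC_preimage in auto)

theorem proposition6p1:
  fixes n :: nat
  assumes "n \<ge> 1"
  shows "locally_compact_space (tempR n) \<and> Hausdorff_space (tempR n) \<and>
         locally_compact_space (tempC n) \<and> Hausdorff_space (tempC n) \<and>
         continuous_map (tempR n) (tempC n) (BC n) \<and>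
         proper_map (tempR n) (tempC n) (BC n) \<and>
         (\<forall>K. compactin (tempC n) K \<longrightarrow>
              compactin (tempR n) {x \<in> topspace (tempR n). BC n x \<in> K})"
  by (simp add: locally_compact_space_tempR Hausdorff_space_tempR locally_compact_space_tempC
      Hausdorff_space_tempC continuous_map_BC proper_map_BC compactin_BC_preimage)

end
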